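(* For every $q\in(0,\infty)$ and $r\in(0,\infty]$ there exists a constant $C=C(q,r)$ such that the following holds. Let $X$ be a finite set, $\nu$ an outer measure on $X$, $\omega$ a measure on $X$, and $\mathcal A$ a collection of pairwise disjoint subsets of $X$; set $B=\bigcup_{A\in\mathcal A}A$. Then for every function $f$ on $X$: if $q\ge r$, $\sum_{A\in\mathcal A}\|f1_A\|^q_{L^q_\nu(\ell^r_\omega)}\le C\|f1_B\|^q_{L^q_\nu(\ell^r_\omega)}$; if $q\le r$, $\|f1_B\|^q_{L^q_\nu(\ell^r_\omega)}\le C\sum_{A\in\mathcal A}\|f1_A\|^q_{L^q_\nu(\ell^r_\omega)}$.
   Context: An outer measure on $X$ is a monotone, subadditive function $\mathcal P(X)\to[0,\infty]$ vanishing on $\varnothing$; standing assumption: outer measures are finite and strictly positive on nonempty subsets; the measure $\omega$ is given by a finite strictly positive weight, $\omega(A)=\sum_{x\in A}\omega(x)$. Convention $\infty^{-1}=0$. For $r\in(0,\infty]$ and nonempty $A\subseteq X$: $\ell^r_\omega(f)(A)=\nu(A)^{-1/r}\|f1_A\|_{L^r(X,\omega)}$; $\|f\|_{L^\infty_\nu(\ell^r_\omega)}=\sup_{\varnothing\ne A\subseteq X}\ell^r_\omega(f)(A)$; for $\lambda>0$, $\nu(\ell^r_\omega(f)>\lambda)=\inf\{\nu(B'):B'\subseteq X,\ \|f1_{X\setminus B'}\|_{L^\infty_\nu(\ell^r_\omega)}\le\lambda\}$; for $q\in(0,\infty)$, $\|f\|_{L^q_\nu(\ell^r_\omega)}=\big(\int_0^\infty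 q\lambda^{q-1}\nu(\ell^r_\omega(f)>\lambda)\,d\lambda\big)^{1/q}$. *)

theory Defs
  imports "HOL-Analysis.Analysis"
begin

definition outer_measure :: "'a set \<Rightarrow> ('a set \<Rightarrow> real) \<Rightarrow> bool" where
  "outer_measure X \<nu> \<longleftrightarrow>
     \<nu> {} = 0 \<and>
     (\<forall>A B. A \<subseteq> B \<and> B \<subseteq> X \<longrightarrow> \<nu> A \<le> \<nu> B) \<and>
     (\<forall>A B. A \<subseteq> X \<and> B \<subseteq> X \<longrightarrow> \<nu> (A \<union> B) \<le> \<nu> A + \<nu> B) \<and>
     (\<forall>A. A \<subseteq> X \<and> A \<noteq> {} \<longrightarrow> \<nu> A > 0)"

text \<open>The measure omega is given by a finite strictly positive weight w on X.\<close>
definition pos_weight :: "'a set \<Rightarrow> ('a \<Rightarrow> real) \<Rightarrow> bool" where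
  "pos_weight X w \<longleftrightarrow> (\<forall>x\<in>X. w x > 0)"

definition restr :: "'a set \<Rightarrow> ('a \<Rightarrow> 'b::real_normed_vector) \<Rightarrow> 'a \<Rightarrow> 'b" where
  "restr A f = (\<lambda>x. if x \<in> A then f x else 0)"

text \<open>L^r(X, omega) norm of f (r in (0, infinity]); for r = infinity the essential supremum,
  which is the maximum since omega is strictly positive.\<close>
definition Lr_norm :: "'a set \<Rightarrow> ('a \<Rightarrow> real) \<Rightarrow> ereal \<Rightarrow> ('a \<Rightarrow> 'b::real_normed_vector) \<Rightarrow> real" where
  "Lr_norm X w r f =
     (if r = \<infinity> then Max ((\<lambda>x. norm (f x)) ` X \<union> {0})
      else (\<Sum>x\<in>X. w x * norm (f x) powr real_of_ereal r) powr (1 / real_of_ereal r))"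

definition inv_exp :: "ereal \<Rightarrow> real" where
  "inv_exp r = (if r = \<infinity> then 0 else 1 / real_of_ereal r)"

definition ell_size :: "'a set \<Rightarrow> ('a set \<Rightarrow> real) \<Rightarrow> ('a \<Rightarrow> real) \<Rightarrow> ereal
    \<Rightarrow> ('a \<Rightarrow> 'b::real_normed_vector) \<Rightarrow> 'a set \<Rightarrow> real" where
  "ell_size X \<nu> w r f A = \<nu> A powr (- inv_exp r) * Lr_norm X w r (restr A f)"

definition Linf_ell :: "'a set \<Rightarrow> ('a set \<Rightarrow> real) \<Rightarrow> ('a \<Rightarrow> real) \<Rightarrow> ereal
    \<Rightarrow> ('a \<Rightarrow> 'b::real_normed_vector) \<Rightarrow> real" where
  "Linf_ell X \<nu> w r f = Max ({ell_size X \<nu> w r f A | A. A \<subseteq> X \<and> A \<noteq> {}} \<union> {0})"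

definition super_level :: "'a set \<Rightarrow> ('a set \<Rightarrow> real) \<Rightarrow> ('a \<Rightarrow> real) \<Rightarrow> ereal
    \<Rightarrow> ('a \<Rightarrow> 'b::real_normed_vector) \<Rightarrow> real \<Rightarrow> real" where
  "super_level X \<nu> w r f lam =
     Inf {\<nu> B' | B'. B' \<subseteq> X \<and> Linf_ell X \<nu> w r (restr (X - B') f) \<le> lam}"

definition Lq_ell :: "'a set \<Rightarrow> ('a set \<Rightarrow> real) \<Rightarrow> ('a \<Rightarrow> real) \<Rightarrow> real \<Rightarrow> ereal
    \<Rightarrow> ('a \<Rightarrow> 'b::real_normed_vector) \<Rightarrow> real" where
  "Lq_ell X \<nu> w q r f =
     (LINT lam:{0<..}|lborel. q * lam powr (q - 1) * super_level X \<nu> w r f lam) powr (1 / q)"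

end

(*
  Write u = w |f|^rho for finite r = rho.  Call B admissible at height t if every E carries at
  most t nu(E) of the u-mass outside B; the super level measure at height lam is the least
  nu(B) over B admissible at height lam^rho.  Up to factors 2 and 4 it agrees with the
  difference quotient of the surplus Psi(t) = max_S (u-mass(S) - t nu(S)).  With
  G(x) = Psi(x^rho) and gamma = 2^(1/rho), the q-th power of the L^q_nu(l^rho) quasi-norm is
  therefore comparable to
    K(u) = int_0^oo x^(q-rho-1) (G(x) - G(gamma x)) dx.
  By a dilation, K(u) is (1 - 2^((rho-q)/rho)) times a regularised Mellin transform of G, plus
  a multiple of the total mass.  The mass is additive and the surplus is superadditive over
  disjoint pieces, so K is superadditive for rho <= q and subadditive for q <= rho.  For
  r = oo the super level measure is nu{|f| > lam}, and the subadditivity of nu gives the only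
  non-vacuous inequality.
*)

theory Submission
  imports Defs
begin

lemma enn2real_le_sum:
  assumes "x \<le> (\<Sum>i\<in>I. f i)" "\<And>i. i \<in> I \<Longrightarrow> f i < \<infinity>"
  shows "enn2real x \<le> (\<Sum>i\<in>I. enn2real (f i))"
proof -
  have "(\<Sum>i\<in>I. f i) < \<infinity>"
    using assms(2) by (cases "finite I") (auto simp: infinity_ennreal_def)
  then have "enn2real x \<le> enn2real (\<Sum>i\<in>I. f i)"
    using assms(1) by (intro enn2real_mono) auto
  then show ?thesis
    using assms(2) by (simp add: enn2real_sum)
qed

lemma sum_enn2real_le:
  assumes "finite I" "(\<Sum>i\<in>I. f i) \<le> x" "x < \<infinity>"
  shows "(\<Sum>i\<in>I. enn2real (f i)) \<le> enn2real x"
proof -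
  have "\<And>i. i \<in> I \<Longrightarrow> f i < \<infinity>"
    using assms by (meson member_le_sum order_le_less_trans zero_le)
  then have "(\<Sum>i\<in>I. enn2real (f i)) = enn2real (\<Sum>i\<in>I. f i)"
    by (simp add: enn2real_sum)
  also have "\<dots> \<le> enn2real x"
    using assms(2,3) by (intro enn2real_mono) auto
  finally show ?thesis .
qed

lemma nn_integral_powr_bounded_finite:
  fixes f :: "real \<Rightarrow> real"
  assumes q: "0 < q" and C: "0 \<le> C" and \<Lambda>: "0 \<le> \<Lambda>"
    and bound: "\<And>x. 0 < x \<Longrightarrow> x \<le> \<Lambda> \<Longrightarrow> f x \<le> C * x powr (q - 1)"
    and vanish: "\<And>x. \<Lambda> < x \<Longrightarrow> f x \<le> 0"
  shows "(\<integral>\<^sup>+x\<in>{0<..}. ennreal (f x) \<partial>lborel) < \<infinity>"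
proof -
  have "(\<integral>\<^sup>+x\<in>{0<..}. ennreal (f x) \<partial>lborel)
      \<le> (\<integral>\<^sup>+x. ennreal (C * x powr (q - 1)) * indicator {0..\<Lambda>} x \<partial>lborel)"
  proof (intro nn_integral_mono)
    fix x :: real
    show "ennreal (f x) * indicator {0<..} x \<le> ennreal (C * x powr (q - 1)) * indicator {0..\<Lambda>} x"
      using bound[of x] vanish[of x] by (cases "x \<le> \<Lambda>") (auto simp: indicator_def ennreal_leI ennreal_eq_0_iff)
  qed
  also have "\<dots> = ennreal (C * (\<Lambda> powr (q - 1 + 1) / (q - 1 + 1)))"
    using C \<Lambda> q
    by (intro nn_integral_has_integral_lebesgue' has_integral_mult_right has_integral_powr_from_0) auto
  finally show ?thesis
    by (simp add: order_le_less_trans)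
qed

lemma nn_integral_powr_dilation:
  fixes f :: "real \<Rightarrow> real"
  assumes c: "0 < c" and f [measurable]: "f \<in> borel_measurable borel"
  shows "(\<integral>\<^sup>+x\<in>{0<..}. ennreal (x powr s * f (c * x)) \<partial>lborel)
       = ennreal (c powr - (s + 1)) * (\<integral>\<^sup>+x\<in>{0<..}. ennreal (x powr s * f x) \<partial>lborel)"
proof -
  have "(\<integral>\<^sup>+y\<in>{0<..}. ennreal (y powr s * f y) \<partial>lborel)
      = ennreal c * (\<integral>\<^sup>+x. ennreal ((0 + c * x) powr s * f (0 + c * x)) * indicator {0<..} (0 + c * x) \<partial>lborel)"
    using c nn_integral_real_affine[where f="\<lambda>y. ennreal (y powr s * f y) * indicator {0<..} y" and c=c and t=0]
    by simp
  also have "(\<lambda>x. ennreal ((0 + c * x) powr s * f (0 + c * x)) * indicator {0<..} (0 + c * x))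
      = (\<lambda>x. ennreal (c powr s) * (ennreal (x powr s * f (c * x)) * indicator {0<..} x))"
    using c by (auto simp: fun_eq_iff indicator_def zero_less_mult_iff powr_mult ennreal_mult' mult.assoc)
  also have "(\<integral>\<^sup>+x. ennreal (c powr s) * (ennreal (x powr s * f (c * x)) * indicator {0<..} x) \<partial>lborel)
      = ennreal (c powr s) * (\<integral>\<^sup>+x\<in>{0<..}. ennreal (x powr s * f (c * x)) \<partial>lborel)"
    by (intro nn_integral_cmult) measurable
  finally have "(\<integral>\<^sup>+y\<in>{0<..}. ennreal (y powr s * f y) \<partial>lborel)
      = ennreal (c powr (s + 1)) * (\<integral>\<^sup>+x\<in>{0<..}. ennreal (x powr s * f (c * x)) \<partial>lborel)"
    using c by (simp add: powr_add mult.assoc ennreal_mult' mult.commute)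
  moreover have "ennreal (c powr - (s + 1)) * ennreal (c powr (s + 1)) = 1"
    using c by (simp flip: ennreal_mult add: powr_add[symmetric])
  ultimately show ?thesis
    by (simp add: mult.assoc[symmetric])
qed

lemma root_scaled_le_iff:
  fixes a m lam \<rho> :: real
  assumes "0 < a" "0 \<le> m" "0 < lam" "0 < \<rho>"
  shows "a powr - (1 / \<rho>) * m powr (1 / \<rho>) \<le> lam \<longleftrightarrow> m \<le> lam powr \<rho> * a"
proof -
  have "(m / a) powr (1 / \<rho>) = m powr (1 / \<rho>) / a powr (1 / \<rho>)"
    using assms by (intro powr_divide)
  then have "a powr - (1 / \<rho>) * m powr (1 / \<rho>) = (m / a) powr (1 / \<rho>)"
    by (simp add: powr_minus divide_inverse mult.commute)
  also have "(m / a) powr (1 / \<rho>) \<le> lam \<longleftrightarrow> m / a \<le> lam powr \<rho>"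
  proof
    assume "(m / a) powr (1 / \<rho>) \<le> lam"
    then have "((m / a) powr (1 / \<rho>)) powr \<rho> \<le> lam powr \<rho>"
      using assms by (intro powr_mono2) auto
    then show "m / a \<le> lam powr \<rho>"
      using assms by (simp add: powr_powr)
  next
    assume "m / a \<le> lam powr \<rho>"
    then have "(m / a) powr (1 / \<rho>) \<le> (lam powr \<rho>) powr (1 / \<rho>)"
      using assms by (intro powr_mono2) auto
    then show "(m / a) powr (1 / \<rho>) \<le> lam"
      using assms by (simp add: powr_powr)
  qed
  also have "\<dots> \<longleftrightarrow> m \<le> lam powr \<rho> * a"
    using assms(1) by (simp add: divide_le_eq)
  finally show ?thesis .
qed

locale finite_outer_measure =
  fixes X :: "'a set" and \<nu> :: "'a set \<Rightarrow> real"
  assumes finite_space: "finite X" and outer_measure: "outer_measure X \<nu>"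
begin

lemma empty [simp]: "\<nu> {} = 0"
  using outer_measure by (simp add: outer_measure_def)

lemma mono: "A \<subseteq> B \<Longrightarrow> B \<subseteq> X \<Longrightarrow> \<nu> A \<le> \<nu> B"
  using outer_measure by (simp add: outer_measure_def)

lemma subadditive: "A \<subseteq> X \<Longrightarrow> B \<subseteq> X \<Longrightarrow> \<nu> (A \<union> B) \<le> \<nu> A + \<nu> B"
  using outer_measure by (simp add: outer_measure_def)

lemma positive: "A \<subseteq> X \<Longrightarrow> A \<noteq> {} \<Longrightarrow> 0 < \<nu> A"
  using outer_measure by (simp add: outer_measure_def)

lemma nonneg: "A \<subseteq> X \<Longrightarrow> 0 \<le> \<nu> A"
  using mono[of "{}" A] by simp

lemma UN_le_sum:
  assumes "finite I" "\<And>i. i \<in> I \<Longrightarrow> F i \<subseteq> X"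
  shows "\<nu> (\<Union>i\<in>I. F i) \<le> (\<Sum>i\<in>I. \<nu> (F i))"
  using assms
proof (induction I rule: finite_induct)
  case (insert i I)
  have "\<nu> (\<Union>j\<in>insert i I. F j) \<le> \<nu> (F i) + \<nu> (\<Union>j\<in>I. F j)"
    using insert.prems by (auto intro: subadditive)
  with insert show ?case by simp
qed simp

lemma finite_subsets: "\<A> \<subseteq> Pow X \<Longrightarrow> finite \<A>"
  using finite_space by (meson finite_Pow_iff finite_subset)

section \<open>Surplus and level of a weight\<close>

definition mass :: "('a \<Rightarrow> real) \<Rightarrow> 'a set \<Rightarrow> real" where
  "mass u S = sum u (X \<inter> S)"

definition surplus :: "('a \<Rightarrow> real) \<Rightarrow> real \<Rightarrow> real" where
  "surplus u t = Max ((\<lambda>S. mass u S - t * \<nu> S) ` Pow X)"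

definition admissible :: "('a \<Rightarrow> real) \<Rightarrow> real \<Rightarrow> 'a set \<Rightarrow> bool" where
  "admissible u t B \<longleftrightarrow> B \<subseteq> X \<and> (\<forall>E\<subseteq>X. mass u (E - B) \<le> t * \<nu> E)"

definition level :: "('a \<Rightarrow> real) \<Rightarrow> real \<Rightarrow> real" where
  "level u t = Inf {\<nu> B | B. admissible u t B}"

lemma mass_union: "S \<inter> T = {} \<Longrightarrow> mass u (S \<union> T) = mass u S + mass u T"
  unfolding mass_def using finite_space
  by (metis Int_Un_distrib finite_Int inf_bot_right inf_left_commute inf_sup_aci(1) sum.union_disjoint)

lemma mass_mono: "\<forall>x\<in>X. 0 \<le> u x \<Longrightarrow> S \<subseteq> T \<Longrightarrow> mass u S \<le> mass u T"
  unfolding mass_def using finite_space by (intro sum_mono2) auto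

lemma mass_nonneg: "\<forall>x\<in>X. 0 \<le> u x \<Longrightarrow> 0 \<le> mass u S"
  using mass_mono[of u "{}" S] by (simp add: mass_def)

lemma restr_nonneg: "\<forall>x\<in>X. 0 \<le> u x \<Longrightarrow> \<forall>x\<in>X. 0 \<le> restr A u x" for u :: "'a \<Rightarrow> real"
  by (simp add: restr_def)

lemma mass_restr: "mass (restr A u) S = sum u (X \<inter> S \<inter> A)"
  unfolding mass_def restr_def using finite_space
  by (simp add: sum.inter_restrict[symmetric] Int_assoc)

lemma mass_restr_Union:
  assumes "\<A> \<subseteq> Pow X" "disjoint \<A>"
  shows "(\<Sum>A\<in>\<A>. mass (restr A u) X) = mass (restr (\<Union>\<A>) u) X"
proof -
  have "(\<Sum>A\<in>\<A>. mass (restr A u) X) = (\<Sum>A\<in>\<A>. sum u A)"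
    using assms(1) by (intro sum.cong) (auto simp: mass_restr Int_absorb1)
  also have "\<dots> = sum u (\<Union>\<A>)"
    using assms finite_space
    by (subst sum.Union_disjoint) (auto simp: disjoint_def intro: finite_subset)
  also have "\<dots> = mass (restr (\<Union>\<A>) u) X"
    using assms(1) by (auto simp: mass_restr intro!: arg_cong[where f="sum u"])
  finally show ?thesis .
qed

lemma surplus_ge: "S \<subseteq> X \<Longrightarrow> mass u S - t * \<nu> S \<le> surplus u t"
  unfolding surplus_def using finite_space by (intro Max_ge) auto

lemma surplus_attained:
  obtains S where "S \<subseteq> X" "surplus u t = mass u S - t * \<nu> S"
proof -
  have "surplus u t \<in> (\<lambda>S. mass u S - t * \<nu> S) ` Pow X"
    unfolding surplus_def using finite_space by (intro Max_in) auto
  then show ?thesis using that by auto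
qed

lemma surplus_nonneg: "0 \<le> surplus u t"
  using surplus_ge[of "{}" u t] by (simp add: mass_def)

lemma surplus_antimono: "t \<le> t' \<Longrightarrow> surplus u t' \<le> surplus u t"
proof -
  assume "t \<le> t'"
  obtain S where S: "S \<subseteq> X" "surplus u t' = mass u S - t' * \<nu> S"
    by (rule surplus_attained)
  have "t * \<nu> S \<le> t' * \<nu> S"
    using \<open>t \<le> t'\<close> nonneg[OF S(1)] by (rule mult_right_mono)
  then show ?thesis using surplus_ge[OF S(1), of u t] S(2) by linarith
qed

lemma surplus_lipschitz:
  assumes "t \<le> t'" shows "surplus u t - surplus u t' \<le> (t' - t) * \<nu> X"
proof -
  obtain S where S: "S \<subseteq> X" "surplus u t = mass u S - t * \<nu> S"
    by (rule surplus_attained)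
  have "(t' - t) * \<nu> S \<le> (t' - t) * \<nu> X"
    using assms mono[OF S(1)] by (intro mult_left_mono) auto
  then show ?thesis using surplus_ge[OF S(1), of u t'] S(2) by (simp add: algebra_simps)
qed

lemma surplus_zero:
  assumes "\<forall>x\<in>X. 0 \<le> u x" shows "surplus u 0 = mass u X"
proof -
  obtain S where S: "S \<subseteq> X" "surplus u 0 = mass u S - 0 * \<nu> S"
    by (rule surplus_attained)
  then show ?thesis using surplus_ge[of X u 0] mass_mono[OF assms S(1)] by simp
qed

lemma surplus_le_mass: "\<forall>x\<in>X. 0 \<le> u x \<Longrightarrow> 0 \<le> t \<Longrightarrow> surplus u t \<le> mass u X"
  using surplus_antimono[of 0 t u] surplus_zero by simp

lemma surplus_eventually_zero: obtains L where "0 < L" "\<And>t. L \<le> t \<Longrightarrow> surplus u t = 0"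
proof -
  define L where "L = 1 + (\<Sum>S\<in>Pow X - {{}}. \<bar>mass u S\<bar> / \<nu> S)"
  have "surplus u t = 0" if "L \<le> t" for t
  proof -
    obtain S where S: "S \<subseteq> X" "surplus u t = mass u S - t * \<nu> S"
      by (rule surplus_attained)
    have "mass u S \<le> t * \<nu> S"
    proof (cases "S = {}")
      case False
      then have "\<bar>mass u S\<bar> / \<nu> S \<le> (\<Sum>S\<in>Pow X - {{}}. \<bar>mass u S\<bar> / \<nu> S)"
        using S(1) finite_space positive
        by (intro member_le_sum) (auto intro!: divide_nonneg_pos)
      moreover have "mass u S / \<nu> S \<le> \<bar>mass u S\<bar> / \<nu> S"
        using positive[OF S(1) False] by (simp add: divide_right_mono)
      ultimately have "mass u S / \<nu> S \<le> t" using \<open>L \<le> t\<close> unfolding L_def by linarith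
      then show ?thesis using positive[OF S(1) False] by (simp add: divide_le_eq)
    qed (simp add: mass_def)
    then show ?thesis using surplus_nonneg[of u t] S(2) by linarith
  qed
  moreover have "0 < L"
    unfolding L_def using positive by (auto intro!: add_pos_nonneg sum_nonneg divide_nonneg_pos)
  ultimately show ?thesis using that by blast
qed

lemma admissible_space: "0 \<le> t \<Longrightarrow> admissible u t X"
  unfolding admissible_def using nonneg by (auto simp: mass_def)

lemma level_le: "admissible u t B \<Longrightarrow> level u t \<le> \<nu> B"
  unfolding level_def
  by (rule cInf_lower) (auto intro!: bdd_belowI[of _ 0] simp: admissible_def intro: nonneg)

lemma level_ge: "0 \<le> t \<Longrightarrow> (\<And>B. admissible u t B \<Longrightarrow> a \<le> \<nu> B) \<Longrightarrow> a \<le> level u t"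
  unfolding level_def using admissible_space by (intro cInf_greatest) blast+

text \<open>A maximiser of the surplus at height \<open>t\<close> is admissible at height \<open>t\<close>.\<close>

lemma level_le_surplus_quotient:
  assumes t: "0 < t"
  shows "level u t \<le> 2 * (surplus u (t/2) - surplus u t) / t"
proof -
  obtain S where S: "S \<subseteq> X" "surplus u t = mass u S - t * \<nu> S"
    by (rule surplus_attained)
  have "admissible u t S"
    unfolding admissible_def
  proof (intro conjI allI impI)
    fix E assume E: "E \<subseteq> X"
    have "mass u (S \<union> E) - t * \<nu> (S \<union> E) \<le> surplus u t"
      using S E by (intro surplus_ge) auto
    moreover have "mass u (S \<union> E) = mass u S + mass u (E - S)"
      by (metis mass_union Diff_disjoint Un_Diff_cancel)
    moreover have "t * \<nu> (S \<union> E) \<le> t * (\<nu> S + \<nu> E)"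
      using S E t by (intro mult_left_mono subadditive) auto
    ultimately show "mass u (E - S) \<le> t * \<nu> E"
      using S by (simp add: algebra_simps)
  qed (use S in auto)
  then have "level u t * t \<le> \<nu> S * t"
    using t by (intro mult_right_mono level_le) auto
  also have "\<nu> S * t \<le> 2 * (surplus u (t/2) - surplus u t)"
    using surplus_ge[OF S(1), of u "t/2"] S(2) by (simp add: algebra_simps)
  finally show ?thesis using t by (simp add: le_divide_eq)
qed

text \<open>Every admissible set carries at least half the outer measure of a maximiser of the surplus at
  height \<open>2 t\<close>.\<close>

lemma surplus_quotient_le_level:
  assumes t: "0 < t"
  shows "(surplus u (2*t) - surplus u (4*t)) / (4*t) \<le> level u t"
proof (rule level_ge)
  obtain S where S: "S \<subseteq> X" "surplus u (2*t) = mass u S - (2*t) * \<nu> S"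
    by (rule surplus_attained)
  fix B assume B: "admissible u t B"
  have "mass u (S \<inter> B) - (2*t) * \<nu> (S \<inter> B) \<le> surplus u (2*t)"
    using S by (intro surplus_ge) auto
  moreover have "mass u S = mass u (S \<inter> B) + mass u (S - B)"
    by (metis mass_union Diff_disjoint Int_Diff_Un Int_Diff_disjoint)
  moreover have "mass u (S - B) \<le> t * \<nu> S"
    using B S by (simp add: admissible_def)
  ultimately have "t * \<nu> S \<le> t * (2 * \<nu> (S \<inter> B))"
    using S(2) by (simp add: algebra_simps)
  then have "\<nu> S \<le> 2 * \<nu> (S \<inter> B)"
    using t by simp
  also have "\<dots> \<le> 2 * \<nu> B"
    using B by (auto simp: admissible_def intro: mono)
  finally have "\<nu> S \<le> 2 * \<nu> B" .
  have "surplus u (2*t) - surplus u (4*t) \<le> 2*t * \<nu> S"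
    using surplus_ge[OF S(1), of u "4*t"] S(2) by (simp add: algebra_simps)
  also have "\<dots> \<le> 2*t * (2 * \<nu> B)"
    using \<open>\<nu> S \<le> 2 * \<nu> B\<close> t by (intro mult_left_mono) auto
  finally show "(surplus u (2*t) - surplus u (4*t)) / (4*t) \<le> \<nu> B"
    using t by (simp add: divide_le_eq mult.commute mult.left_commute)
qed (use t in simp)

text \<open>Maximisers for the pieces, cut down to their pieces, combine to a competitor for the union.\<close>

lemma surplus_superadditive:
  assumes \<A>: "\<A> \<subseteq> Pow X" "disjoint \<A>" and t: "0 \<le> t"
  shows "(\<Sum>A\<in>\<A>. surplus (restr A u) t) \<le> surplus (restr (\<Union>\<A>) u) t"
proof -
  have "\<forall>A. \<exists>S. S \<subseteq> X \<and> surplus (restr A u) t = mass (restr A u) S - t * \<nu> S"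
    by (meson surplus_attained)
  then obtain S where S: "\<And>A. S A \<subseteq> X" "\<And>A. surplus (restr A u) t = mass (restr A u) (S A) - t * \<nu> (S A)"
    by metis
  define T where "T = (\<Union>A\<in>\<A>. S A \<inter> A)"
  have T: "T \<subseteq> X"
    using S by (auto simp: T_def)
  have disj: "\<forall>A\<in>\<A>. \<forall>A'\<in>\<A>. A \<noteq> A' \<longrightarrow> (S A \<inter> A) \<inter> (S A' \<inter> A') = {}"
    using \<A>(2) unfolding disjoint_def by blast
  have "(\<Sum>A\<in>\<A>. surplus (restr A u) t) \<le> (\<Sum>A\<in>\<A>. sum u (S A \<inter> A) - t * \<nu> (S A \<inter> A))"
    using S t by (intro sum_mono) (auto simp: mass_restr Int_absorb1 intro!: mult_left_mono mono)
  also have "\<dots> = sum u T - t * (\<Sum>A\<in>\<A>. \<nu> (S A \<inter> A))"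
    unfolding T_def using finite_subsets[OF \<A>(1)] finite_space S disj
    by (subst sum.UNION_disjoint) (auto simp: sum_subtractf sum_distrib_left intro: finite_subset)
  also have "\<dots> \<le> sum u T - t * \<nu> T"
    unfolding T_def using t S finite_subsets[OF \<A>(1)] by (intro diff_left_mono mult_left_mono UN_le_sum) auto
  also have "sum u T = mass (restr (\<Union>\<A>) u) T"
    using T by (auto simp: mass_restr T_def intro!: arg_cong[where f="sum u"])
  also have "\<dots> - t * \<nu> T \<le> surplus (restr (\<Union>\<A>) u) t"
    by (rule surplus_ge[OF T])
  finally show ?thesis .
qed

lemma borel_measurable_surplus [measurable]: "surplus u \<in> borel_measurable borel"
proof -
  have "mono (\<lambda>t. - surplus u t)"
    by (rule monoI) (simp add: surplus_antimono)
  then have "(\<lambda>t. - (- surplus u t)) \<in> borel_measurable borel"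
    using borel_measurable_mono by measurable
  then show ?thesis
    by simp
qed

section \<open>Super level measures\<close>

lemma finite_ell_sizes: "finite {ell_size X \<nu> w r g E | E. E \<subseteq> X \<and> E \<noteq> {}}"
proof -
  have "{ell_size X \<nu> w r g E | E. E \<subseteq> X \<and> E \<noteq> {}} \<subseteq> (\<lambda>E. ell_size X \<nu> w r g E) ` Pow X"
    by blast
  then show ?thesis
    using finite_space by (meson finite_Pow_iff finite_imageI finite_subset)
qed

lemma Linf_ell_le_iff:
  assumes "0 \<le> lam"
  shows "Linf_ell X \<nu> w r g \<le> lam \<longleftrightarrow> (\<forall>E\<subseteq>X. E \<noteq> {} \<longrightarrow> ell_size X \<nu> w r g E \<le> lam)"
  unfolding Linf_ell_def using finite_ell_sizes[of w r g] assms by (auto simp: Max_le_iff)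

lemma Linf_ell_nonneg: "0 \<le> Linf_ell X \<nu> w r g"
  unfolding Linf_ell_def using finite_ell_sizes by (intro Max_ge) auto

lemma Lr_norm_zero [simp]: "Lr_norm X w r (\<lambda>x. 0 :: 'b::real_normed_vector) = 0"
proof -
  have "Max (insert 0 ((\<lambda>x. 0 :: real) ` X)) = 0"
    using finite_space by (intro Max_eqI) auto
  then show ?thesis
    by (simp add: Lr_norm_def)
qed

lemma Linf_ell_zero: "Linf_ell X \<nu> w r (\<lambda>x. 0 :: 'b::real_normed_vector) = 0"
  using Linf_ell_le_iff[of 0 w r "\<lambda>x. 0 :: 'b"] Linf_ell_nonneg[of w r "\<lambda>x. 0 :: 'b"]
  by (simp add: ell_size_def restr_def)

lemma Linf_ell_restr_space: "Linf_ell X \<nu> w r (restr X g) = Linf_ell X \<nu> w r g"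
proof -
  have "restr E (restr X g) = restr E g" if "E \<subseteq> X" for E
    using that by (auto simp: restr_def fun_eq_iff)
  then show ?thesis
    unfolding Linf_ell_def ell_size_def by metis
qed

lemma super_level_candidates:
  assumes "0 \<le> lam"
  shows "\<nu> X \<in> {\<nu> B | B. B \<subseteq> X \<and> Linf_ell X \<nu> w r (restr (X - B) g) \<le> lam}"
    and "bdd_below {\<nu> B | B. B \<subseteq> X \<and> Linf_ell X \<nu> w r (restr (X - B) g) \<le> lam}"
proof -
  have "restr (X - X) g = (\<lambda>x. 0)"
    by (simp add: restr_def)
  then show "\<nu> X \<in> {\<nu> B | B. B \<subseteq> X \<and> Linf_ell X \<nu> w r (restr (X - B) g) \<le> lam}"
    using assms by (intro CollectI exI[of _ X]) (simp add: Linf_ell_zero)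
  show "bdd_below {\<nu> B | B. B \<subseteq> X \<and> Linf_ell X \<nu> w r (restr (X - B) g) \<le> lam}"
    by (rule bdd_belowI[of _ 0]) (auto intro: nonneg)
qed

lemma super_level_nonneg: "0 \<le> lam \<Longrightarrow> 0 \<le> super_level X \<nu> w r g lam"
  unfolding super_level_def using super_level_candidates(1)[of lam w r g]
  by (intro cInf_greatest) (auto intro: nonneg)

lemma super_level_le_space: "0 \<le> lam \<Longrightarrow> super_level X \<nu> w r g lam \<le> \<nu> X"
  unfolding super_level_def using super_level_candidates[of lam w r g] by (intro cInf_lower)

lemma super_level_antimono:
  assumes "0 \<le> lam" "lam \<le> lam'"
  shows "super_level X \<nu> w r g lam' \<le> super_level X \<nu> w r g lam"
  unfolding super_level_def using super_level_candidates(1)[OF assms(1), of w r g]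
    super_level_candidates(2)[of lam' w r g] assms
  by (intro cInf_superset_mono) auto

lemma super_level_eq_0:
  assumes "Linf_ell X \<nu> w r g \<le> lam"
  shows "super_level X \<nu> w r g lam = 0"
  unfolding super_level_def
proof (rule cInf_eq_minimum)
  show "0 \<in> {\<nu> B | B. B \<subseteq> X \<and> Linf_ell X \<nu> w r (restr (X - B) g) \<le> lam}"
    using assms by (auto simp: Linf_ell_restr_space intro!: exI[of _ "{}"])
qed (auto intro: nonneg)

lemma borel_measurable_super_level:
  "super_level X \<nu> w r g \<in> borel_measurable (restrict_space borel {0<..})"
proof -
  have "mono_on {0<..} (\<lambda>lam. - super_level X \<nu> w r g lam)"
    by (rule mono_onI) (simp add: super_level_antimono)
  then have "(\<lambda>lam. - super_level X \<nu> w r g lam) \<in> borel_measurable (restrict_space borel {0<..})"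
    by (rule borel_measurable_mono_on_fnc)
  then have "(\<lambda>lam. - (- super_level X \<nu> w r g lam)) \<in> borel_measurable (restrict_space borel {0<..})"
    by measurable
  then show ?thesis
    by simp
qed

lemma borel_measurable_super_level_integrand:
  "(\<lambda>lam. indicator {0<..} lam *\<^sub>R (q * lam powr (q - 1) * super_level X \<nu> w r g lam))
     \<in> borel_measurable borel"
proof -
  have [measurable]: "super_level X \<nu> w r g \<in> borel_measurable (restrict_space borel {0<..})"
    by (rule borel_measurable_super_level)
  have "(\<lambda>lam. q * lam powr (q - 1) * super_level X \<nu> w r g lam)
      \<in> borel_measurable (restrict_space borel {0<..})"
    by (measurable, rule measurable_restrict_space1, measurable)
  then show ?thesis
    by (simp add: borel_measurable_restrict_space_iff)
qed

definition distribution_integral :: "('a \<Rightarrow> real) \<Rightarrow> ereal \<Rightarrow> real \<Rightarrow> ('a \<Rightarrow> 'b::real_normed_vector) \<Rightarrow> ennreal" where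
  "distribution_integral w r q g =
     (\<integral>\<^sup>+lam\<in>{0<..}. ennreal (q * lam powr (q - 1) * super_level X \<nu> w r g lam) \<partial>lborel)"

lemma distribution_integral_eq:
  "distribution_integral w r q g =
     (\<integral>\<^sup>+lam. ennreal (indicator {0<..} lam *\<^sub>R (q * lam powr (q - 1) * super_level X \<nu> w r g lam)) \<partial>lborel)"
  unfolding distribution_integral_def by (intro nn_integral_cong) (simp add: indicator_def)

lemma borel_measurable_distribution_integrand:
  "(\<lambda>lam. ennreal (q * lam powr (q - 1) * super_level X \<nu> w r g lam) * indicator {0<..} lam)
     \<in> borel_measurable borel"
proof -
  have "(\<lambda>lam. ennreal (indicator {0<..} lam *\<^sub>R (q * lam powr (q - 1) * super_level X \<nu> w r g lam)))
      \<in> borel_measurable borel"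
    using borel_measurable_super_level_integrand by measurable
  then show ?thesis
    by (rule measurable_cong[THEN iffD1, rotated]) (simp add: indicator_def)
qed

lemma Lq_ell_powr_eq:
  assumes q: "0 < q"
  shows "Lq_ell X \<nu> w q r g powr q = enn2real (distribution_integral w r q g)"
proof -
  have "0 \<le> indicator {0<..} lam *\<^sub>R (q * lam powr (q - 1) * super_level X \<nu> w r g lam)" for lam :: real
    using q super_level_nonneg[of lam w r g] by (auto simp: indicator_def)
  then have "(LINT lam:{0<..}|lborel. q * lam powr (q - 1) * super_level X \<nu> w r g lam)
      = enn2real (distribution_integral w r q g)"
    unfolding set_lebesgue_integral_def distribution_integral_eq
    using borel_measurable_super_level_integrand by (intro integral_eq_nn_integral) auto
  then show ?thesis
    using q enn2real_nonneg unfolding Lq_ell_def by (simp add: powr_powr)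
qed

lemma distribution_integral_finite:
  assumes q: "0 < q"
  shows "distribution_integral w r q g < \<infinity>"
  unfolding distribution_integral_def
proof (rule nn_integral_powr_bounded_finite[OF q _ Linf_ell_nonneg])
  fix lam :: real
  assume "0 < lam"
  then show "q * lam powr (q - 1) * super_level X \<nu> w r g lam \<le> q * \<nu> X * lam powr (q - 1)"
    using q super_level_le_space[of lam] by (simp add: mult_left_mono mult.commute mult.left_commute)
next
  fix lam
  assume "Linf_ell X \<nu> w r g < lam"
  then show "q * lam powr (q - 1) * super_level X \<nu> w r g lam \<le> 0"
    by (simp add: super_level_eq_0)
qed (use q nonneg in auto)

lemma Linf_ell_infinity_le_iff:
  assumes "0 \<le> lam"
  shows "Linf_ell X \<nu> w \<infinity> (restr (X - B) g) \<le> lam \<longleftrightarrow> (\<forall>x\<in>X - B. norm (g x) \<le> lam)"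
proof -
  have ell: "ell_size X \<nu> w \<infinity> h E = Max ((\<lambda>x. norm (restr E h x)) ` X \<union> {0})"
    if "E \<subseteq> X" "E \<noteq> {}" for E and h :: "'a \<Rightarrow> 'b"
    using positive[OF that] by (simp add: ell_size_def inv_exp_def Lr_norm_def)
  have "Linf_ell X \<nu> w \<infinity> (restr (X - B) g) \<le> lam \<longleftrightarrow>
      (\<forall>E\<subseteq>X. E \<noteq> {} \<longrightarrow> (\<forall>x\<in>X. norm (restr E (restr (X - B) g) x) \<le> lam))"
    using assms finite_space by (simp add: Linf_ell_le_iff ell)
  also have "\<dots> \<longleftrightarrow> (\<forall>x\<in>X - B. norm (g x) \<le> lam)"
  proof safe
    fix x assume "\<forall>E\<subseteq>X. E \<noteq> {} \<longrightarrow> (\<forall>x\<in>X. norm (restr E (restr (X - B) g) x) \<le> lam)"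
      and "x \<in> X" "x \<notin> B"
    then show "norm (g x) \<le> lam"
      by (auto simp: restr_def dest!: spec[of _ "{x}"])
  qed (use assms in \<open>auto simp: restr_def split: if_splits\<close>)
  finally show ?thesis .
qed

lemma super_level_infinity:
  assumes "0 \<le> lam"
  shows "super_level X \<nu> w \<infinity> g lam = \<nu> {x\<in>X. lam < norm (g x)}"
  unfolding super_level_def
proof (rule cInf_eq_minimum)
  show "\<nu> {x\<in>X. lam < norm (g x)} \<in> {\<nu> B | B. B \<subseteq> X \<and> Linf_ell X \<nu> w \<infinity> (restr (X - B) g) \<le> lam}"
    using assms by (auto simp: Linf_ell_infinity_le_iff)
next
  fix y assume "y \<in> {\<nu> B | B. B \<subseteq> X \<and> Linf_ell X \<nu> w \<infinity> (restr (X - B) g) \<le> lam}"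
  then obtain B where B: "y = \<nu> B" "B \<subseteq> X" "\<forall>x\<in>X - B. norm (g x) \<le> lam"
    using assms by (auto simp: Linf_ell_infinity_le_iff)
  then have "{x\<in>X. lam < norm (g x)} \<subseteq> B"
    by force
  then show "\<nu> {x\<in>X. lam < norm (g x)} \<le> y"
    using B by (simp add: mono)
qed

lemma distribution_integral_infinity_Union_le:
  assumes q: "0 < q" and \<A>: "\<A> \<subseteq> Pow X"
  shows "distribution_integral w \<infinity> q (restr (\<Union>\<A>) g) \<le> (\<Sum>A\<in>\<A>. distribution_integral w \<infinity> q (restr A g))"
proof -
  have "ennreal (q * lam powr (q - 1) * super_level X \<nu> w \<infinity> (restr (\<Union>\<A>) g) lam)
      \<le> (\<Sum>A\<in>\<A>. ennreal (q * lam powr (q - 1) * super_level X \<nu> w \<infinity> (restr A g) lam))"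
    if "0 < lam" for lam
  proof -
    have "{x\<in>X. lam < norm (restr (\<Union>\<A>) g x)} = (\<Union>A\<in>\<A>. {x\<in>X. lam < norm (restr A g x)})"
      using that by (auto simp: restr_def split: if_splits)
    then have "\<nu> {x\<in>X. lam < norm (restr (\<Union>\<A>) g x)} \<le> (\<Sum>A\<in>\<A>. \<nu> {x\<in>X. lam < norm (restr A g x)})"
      using finite_subsets[OF \<A>] by (simp add: UN_le_sum)
    then have "q * lam powr (q - 1) * super_level X \<nu> w \<infinity> (restr (\<Union>\<A>) g) lam
        \<le> (\<Sum>A\<in>\<A>. q * lam powr (q - 1) * super_level X \<nu> w \<infinity> (restr A g) lam)"
      using that q by (simp add: super_level_infinity sum_distrib_left[symmetric] mult_left_mono)
    then have "ennreal (q * lam powr (q - 1) * super_level X \<nu> w \<infinity> (restr (\<Union>\<A>) g) lam)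
        \<le> ennreal (\<Sum>A\<in>\<A>. q * lam powr (q - 1) * super_level X \<nu> w \<infinity> (restr A g) lam)"
      by (rule ennreal_leI)
    also have "\<dots> = (\<Sum>A\<in>\<A>. ennreal (q * lam powr (q - 1) * super_level X \<nu> w \<infinity> (restr A g) lam))"
      using that q by (intro sum_ennreal[symmetric]) (simp add: super_level_nonneg)
    finally show ?thesis .
  qed
  note pointwise = this
  have "distribution_integral w \<infinity> q (restr (\<Union>\<A>) g)
      \<le> (\<integral>\<^sup>+lam. (\<Sum>A\<in>\<A>. ennreal (q * lam powr (q - 1) * super_level X \<nu> w \<infinity> (restr A g) lam)
                        * indicator {0<..} lam) \<partial>lborel)"
    unfolding distribution_integral_def
  proof (intro nn_integral_mono)
    fix lam :: real
    show "ennreal (q * lam powr (q - 1) * super_level X \<nu> w \<infinity> (restr (\<Union>\<A>) g) lam) * indicator {0<..} lam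
        \<le> (\<Sum>A\<in>\<A>. ennreal (q * lam powr (q - 1) * super_level X \<nu> w \<infinity> (restr A g) lam) * indicator {0<..} lam)"
      using pointwise[of lam] by (cases "0 < lam") auto
  qed
  also have "\<dots> = (\<Sum>A\<in>\<A>. distribution_integral w \<infinity> q (restr A g))"
    unfolding distribution_integral_def
    by (intro nn_integral_sum) (simp add: borel_measurable_distribution_integrand)
  finally show ?thesis .
qed

lemma Lq_ell_infinity_Union_le:
  assumes "0 < q" "\<A> \<subseteq> Pow X"
  shows "Lq_ell X \<nu> w q \<infinity> (restr (\<Union>\<A>) g) powr q \<le> (\<Sum>A\<in>\<A>. Lq_ell X \<nu> w q \<infinity> (restr A g) powr q)"
  unfolding Lq_ell_powr_eq[OF assms(1)]
  by (intro enn2real_le_sum distribution_integral_infinity_Union_le distribution_integral_finite assms)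

end

section \<open>Mellin transforms of the surplus\<close>

locale mixed_norm = finite_outer_measure +
  fixes q \<rho> :: real
  assumes q_pos: "0 < q" and rho_pos: "0 < \<rho>"
begin

definition "s = q - \<rho> - 1"

definition "\<gamma> = 2 powr (1 / \<rho>)"

definition "\<kappa> = \<gamma> powr - (s + 1)"

lemma gamma_gt_1: "1 < \<gamma>"
  unfolding \<gamma>_def using rho_pos by simp

lemma gamma_powr: "\<gamma> powr \<rho> = 2"
  unfolding \<gamma>_def using rho_pos by (simp add: powr_powr)

lemma powr_mult_gamma: "0 \<le> x \<Longrightarrow> (\<gamma> * x) powr \<rho> = 2 * x powr \<rho>"
  using gamma_gt_1 by (simp add: powr_mult gamma_powr)

lemma powr_divide_gamma: "0 \<le> x \<Longrightarrow> (x / \<gamma>) powr \<rho> = x powr \<rho> / 2"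
  using gamma_gt_1 by (simp add: powr_divide gamma_powr)

lemma kappa_eq: "\<kappa> = 2 powr ((\<rho> - q) / \<rho>)"
  unfolding \<kappa>_def \<gamma>_def s_def using rho_pos by (simp add: powr_powr field_simps)

lemma kappa_pos: "0 < \<kappa>"
  by (simp add: kappa_eq)

lemma kappa_le_1: "\<rho> \<le> q \<Longrightarrow> \<kappa> \<le> 1"
  unfolding kappa_eq using rho_pos powr_mono[of "(\<rho> - q) / \<rho>" 0 2] by (simp add: divide_nonpos_pos)

lemma kappa_ge_1: "q \<le> \<rho> \<Longrightarrow> 1 \<le> \<kappa>"
  unfolding kappa_eq using rho_pos powr_mono[of 0 "(\<rho> - q) / \<rho>" 2] by simp

lemma inverse_gamma_powr: "inverse \<gamma> powr - (s + 1) = inverse \<kappa>"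
  using gamma_gt_1 unfolding \<kappa>_def by (simp add: inverse_eq_divide powr_divide)

lemma powr_s: "0 < x \<Longrightarrow> x powr s = x powr (q - 1) / x powr \<rho>"
  by (simp add: s_def powr_diff)

definition mellin :: "(real \<Rightarrow> real) \<Rightarrow> ennreal" where
  "mellin f = (\<integral>\<^sup>+x\<in>{0<..}. ennreal (x powr s * f x) \<partial>lborel)"

lemma mellin_dilation:
  "0 < c \<Longrightarrow> f \<in> borel_measurable borel \<Longrightarrow> mellin (\<lambda>x. f (c * x)) = ennreal (c powr - (s + 1)) * mellin f"
  unfolding mellin_def by (rule nn_integral_powr_dilation)

lemma mellin_mono: "(\<And>x. 0 < x \<Longrightarrow> f x \<le> g x) \<Longrightarrow> mellin f \<le> mellin g"
  unfolding mellin_def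
  by (intro nn_integral_mono) (auto simp: indicator_def intro!: ennreal_leI mult_left_mono)

lemma mellin_cong: "(\<And>x. 0 < x \<Longrightarrow> f x = g x) \<Longrightarrow> mellin f = mellin g"
  by (intro order.antisym mellin_mono) auto

lemma mellin_cmult:
  assumes "0 \<le> c" and [measurable]: "f \<in> borel_measurable borel"
  shows "mellin (\<lambda>x. c * f x) = ennreal c * mellin f"
proof -
  have "mellin (\<lambda>x. c * f x) = (\<integral>\<^sup>+x. ennreal c * (ennreal (x powr s * f x) * indicator {0<..} x) \<partial>lborel)"
    unfolding mellin_def using assms(1)
    by (intro nn_integral_cong) (simp add: ennreal_mult' ac_simps)
  also have "\<dots> = ennreal c * mellin f"
    unfolding mellin_def by (intro nn_integral_cmult) measurable
  finally show ?thesis .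
qed

lemma mellin_add:
  assumes [measurable]: "f \<in> borel_measurable borel" "g \<in> borel_measurable borel"
    and "\<And>x. 0 < x \<Longrightarrow> 0 \<le> f x" "\<And>x. 0 < x \<Longrightarrow> 0 \<le> g x"
  shows "mellin (\<lambda>x. f x + g x) = mellin f + mellin g"
proof -
  have "mellin (\<lambda>x. f x + g x)
      = (\<integral>\<^sup>+x. ennreal (x powr s * f x) * indicator {0<..} x + ennreal (x powr s * g x) * indicator {0<..} x \<partial>lborel)"
    unfolding mellin_def using assms(3,4)
    by (intro nn_integral_cong) (auto simp: indicator_def distrib_left)
  also have "\<dots> = mellin f + mellin g"
    unfolding mellin_def by (intro nn_integral_add) measurable
  finally show ?thesis .
qed

lemma mellin_sum:
  assumes "\<And>i. i \<in> I \<Longrightarrow> f i \<in> borel_measurable borel" "\<And>i x. i \<in> I \<Longrightarrow> 0 < x \<Longrightarrow> 0 \<le> f i x"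
  shows "mellin (\<lambda>x. \<Sum>i\<in>I. f i x) = (\<Sum>i\<in>I. mellin (f i))"
proof -
  have "mellin (\<lambda>x. \<Sum>i\<in>I. f i x) = (\<integral>\<^sup>+x. (\<Sum>i\<in>I. ennreal (x powr s * f i x) * indicator {0<..} x) \<partial>lborel)"
    unfolding mellin_def using assms(2)
    by (intro nn_integral_cong)
      (auto simp: indicator_def sum_distrib_left simp flip: sum_distrib_right)
  also have "\<dots> = (\<Sum>i\<in>I. mellin (f i))"
    unfolding mellin_def
  proof (intro nn_integral_sum)
    fix i assume "i \<in> I"
    then have [measurable]: "f i \<in> borel_measurable borel"
      by (rule assms(1))
    show "(\<lambda>x. ennreal (x powr s * f i x) * indicator {0<..} x) \<in> borel_measurable lborel"
      by measurable
  qed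
  finally show ?thesis .
qed

lemma mellin_finite:
  assumes "0 \<le> C" "0 \<le> \<Lambda>" "\<And>x. 0 < x \<Longrightarrow> x \<le> \<Lambda> \<Longrightarrow> x powr s * f x \<le> C * x powr (q - 1)"
    "\<And>x. \<Lambda> < x \<Longrightarrow> f x \<le> 0"
  shows "mellin f < \<infinity>"
  unfolding mellin_def using assms
  by (intro nn_integral_powr_bounded_finite[OF q_pos assms(1,2)]) (auto simp: mult_nonneg_nonpos)

definition G :: "('a \<Rightarrow> real) \<Rightarrow> real \<Rightarrow> real" where
  "G u x = surplus u (x powr \<rho>)"

lemma borel_measurable_G [measurable]: "G u \<in> borel_measurable borel"
  unfolding G_def[abs_def] by measurable

lemma G_nonneg: "0 \<le> G u x"
  by (simp add: G_def surplus_nonneg)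

lemma G_antimono: "0 \<le> x \<Longrightarrow> x \<le> y \<Longrightarrow> G u y \<le> G u x"
  unfolding G_def using rho_pos by (intro surplus_antimono powr_mono2) auto

lemma G_le_mass: "\<forall>x\<in>X. 0 \<le> u x \<Longrightarrow> G u x \<le> mass u X"
  unfolding G_def by (intro surplus_le_mass) auto

lemma mass_minus_G_le: "\<forall>x\<in>X. 0 \<le> u x \<Longrightarrow> mass u X - G u x \<le> \<nu> X * x powr \<rho>"
  unfolding G_def using surplus_lipschitz[of 0 "x powr \<rho>" u] surplus_zero[of u] by (simp add: mult.commute)

lemma G_eventually_zero:
  obtains \<Lambda> where "0 < \<Lambda>" "\<And>x. \<Lambda> \<le> x \<Longrightarrow> G u x = 0"
proof -
  obtain L where L: "0 < L" "\<And>t. L \<le> t \<Longrightarrow> surplus u t = 0"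
    using surplus_eventually_zero[of u] by blast
  have "G u x = 0" if "L powr (1 / \<rho>) \<le> x" for x
  proof -
    have "L = (L powr (1 / \<rho>)) powr \<rho>"
      using L(1) rho_pos by (simp add: powr_powr)
    also have "\<dots> \<le> x powr \<rho>"
      using that rho_pos by (intro powr_mono2) auto
    finally show ?thesis
      by (simp add: G_def L(2))
  qed
  then show ?thesis
    using that[of "L powr (1 / \<rho>)"] L(1) by simp
qed

definition K :: "('a \<Rightarrow> real) \<Rightarrow> ennreal" where
  "K u = mellin (\<lambda>x. G u x - G u (\<gamma> * x))"

definition level_integral :: "('a \<Rightarrow> real) \<Rightarrow> ennreal" where
  "level_integral u = (\<integral>\<^sup>+x\<in>{0<..}. ennreal (q * x powr (q - 1) * level u (x powr \<rho>)) \<partial>lborel)"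

lemma K_dilation: "0 < c \<Longrightarrow> mellin (\<lambda>x. G u (c * x) - G u (\<gamma> * (c * x))) = ennreal (c powr - (s + 1)) * K u"
  unfolding K_def by (rule mellin_dilation) measurable

lemma level_integral_le_K: "level_integral u \<le> ennreal (2 * q / \<kappa>) * K u"
proof -
  have "q * x powr (q - 1) * level u (x powr \<rho>) \<le> 2 * q * (G u (x / \<gamma>) - G u x) * x powr s"
    if "0 < x" for x
  proof -
    have "level u (x powr \<rho>) \<le> 2 * (G u (x / \<gamma>) - G u x) / x powr \<rho>"
      using level_le_surplus_quotient[of "x powr \<rho>" u] that by (simp add: G_def powr_divide_gamma)
    then have "q * x powr (q - 1) * level u (x powr \<rho>) \<le> q * x powr (q - 1) * (2 * (G u (x / \<gamma>) - G u x) / x powr \<rho>)"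
      using q_pos by (intro mult_left_mono) auto
    also have "\<dots> = 2 * q * (G u (x / \<gamma>) - G u x) * x powr s"
      using that by (simp add: powr_s field_simps)
    finally show ?thesis .
  qed
  then have "level_integral u \<le> mellin (\<lambda>x. 2 * q * (G u (inverse \<gamma> * x) - G u (\<gamma> * (inverse \<gamma> * x))))"
    unfolding level_integral_def mellin_def using gamma_gt_1
    by (intro nn_integral_mono) (auto simp: indicator_def ac_simps divide_inverse intro!: ennreal_leI)
  also have "\<dots> = ennreal (2 * q) * mellin (\<lambda>x. G u (inverse \<gamma> * x) - G u (\<gamma> * (inverse \<gamma> * x)))"
    using q_pos by (intro mellin_cmult) auto
  also have "\<dots> = ennreal (2 * q) * (ennreal (inverse \<kappa>) * K u)"
    using gamma_gt_1 by (simp only: K_dilation positive_imp_inverse_positive inverse_gamma_powr)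
  also have "\<dots> = ennreal (2 * q / \<kappa>) * K u"
    using q_pos kappa_pos by (simp add: divide_inverse mult.assoc ennreal_mult')
  finally show ?thesis .
qed

lemma K_le_level_integral: "ennreal (q * \<kappa> / 4) * K u \<le> level_integral u"
proof -
  have "q / 4 * (G u (\<gamma> * x) - G u (\<gamma> * (\<gamma> * x))) * x powr s \<le> q * x powr (q - 1) * level u (x powr \<rho>)"
    if "0 < x" for x
  proof -
    have "(G u (\<gamma> * x) - G u (\<gamma> * (\<gamma> * x))) / (4 * x powr \<rho>) \<le> level u (x powr \<rho>)"
      using surplus_quotient_le_level[of "x powr \<rho>" u] that gamma_gt_1
      by (simp add: G_def powr_mult_gamma)
    then have "q * x powr (q - 1) * ((G u (\<gamma> * x) - G u (\<gamma> * (\<gamma> * x))) / (4 * x powr \<rho>))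
        \<le> q * x powr (q - 1) * level u (x powr \<rho>)"
      using q_pos by (intro mult_left_mono) auto
    moreover have "q / 4 * (G u (\<gamma> * x) - G u (\<gamma> * (\<gamma> * x))) * x powr s
        = q * x powr (q - 1) * ((G u (\<gamma> * x) - G u (\<gamma> * (\<gamma> * x))) / (4 * x powr \<rho>))"
      using that by (simp add: powr_s field_simps)
    ultimately show ?thesis
      by linarith
  qed
  then have "mellin (\<lambda>x. q / 4 * (G u (\<gamma> * x) - G u (\<gamma> * (\<gamma> * x)))) \<le> level_integral u"
    unfolding level_integral_def mellin_def
    by (intro nn_integral_mono) (auto simp: indicator_def ac_simps intro!: ennreal_leI)
  moreover have "mellin (\<lambda>x. q / 4 * (G u (\<gamma> * x) - G u (\<gamma> * (\<gamma> * x))))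
      = ennreal (q / 4) * mellin (\<lambda>x. G u (\<gamma> * x) - G u (\<gamma> * (\<gamma> * x)))"
    using q_pos by (intro mellin_cmult) auto
  moreover have "\<dots> = ennreal (q / 4) * (ennreal \<kappa> * K u)"
    using gamma_gt_1 by (simp only: K_dilation \<kappa>_def[symmetric] order.strict_trans[OF zero_less_one])
  moreover have "\<dots> = ennreal (q * \<kappa> / 4) * K u"
  proof -
    have "ennreal (q * \<kappa> / 4) = ennreal (q / 4) * ennreal \<kappa>"
      using q_pos kappa_pos by (simp flip: ennreal_mult)
    then show ?thesis
      by (simp add: mult.assoc)
  qed
  ultimately show ?thesis
    by simp
qed

definition tail :: "('a \<Rightarrow> real) \<Rightarrow> ennreal" where
  "tail u = mellin (\<lambda>x. if 1 \<le> x then G u x else 0)"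

definition head :: "('a \<Rightarrow> real) \<Rightarrow> ennreal" where
  "head u = mellin (\<lambda>x. if x < 1 then mass u X - G u x else 0)"

definition band :: ennreal where
  "band = mellin (indicator {inverse \<gamma>..<1})"

lemma decrement_split:
  assumes "0 < x"
  shows "(G u x - G u (\<gamma> * x)) + (if 1 \<le> \<gamma> * x then G u (\<gamma> * x) else 0) + (if x < 1 then mass u X - G u x else 0)
    = (if 1 \<le> x then G u x else 0) + (if \<gamma> * x < 1 then mass u X - G u (\<gamma> * x) else 0)
      + mass u X * indicator {inverse \<gamma>..<1} x"
proof -
  have scaled: "1 \<le> \<gamma> * x \<longleftrightarrow> inverse \<gamma> \<le> x"
    using gamma_gt_1 by (simp add: inverse_eq_divide divide_le_eq mult.commute)
  have "inverse \<gamma> < 1"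
    using gamma_gt_1 by (simp add: inverse_less_1_iff)
  then consider "1 \<le> x" | "inverse \<gamma> \<le> x" "x < 1" | "x < inverse \<gamma>"
    by linarith
  then show ?thesis
    by cases (use scaled \<open>inverse \<gamma> < 1\<close> in \<open>auto simp: indicator_def\<close>)
qed

text \<open>Formally \<open>K u = (1 - \<kappa>) \<cdot> mellin (G u)\<close>; as \<open>G u\<close> tends to \<open>mass u X\<close> at \<open>0\<close>,
  that transform need not converge, and it is regularised by subtracting \<open>mass u X\<close> on \<open>(0, 1)\<close>.\<close>

lemma K_decomposition:
  assumes u: "\<forall>x\<in>X. 0 \<le> u x"
  shows "K u + ennreal \<kappa> * tail u + head u = tail u + ennreal \<kappa> * head u + ennreal (mass u X) * band"
proof -
  define T where "T x = (if 1 \<le> x then G u x else 0)" for x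
  define H where "H x = (if x < 1 then mass u X - G u x else 0)" for x
  define D where "D x = G u x - G u (\<gamma> * x)" for x
  have T_meas [measurable]: "T \<in> borel_measurable borel"
    unfolding T_def by measurable
  have H_meas [measurable]: "H \<in> borel_measurable borel"
    unfolding H_def by measurable
  have [measurable]: "D \<in> borel_measurable borel"
    unfolding D_def by measurable
  have T: "0 \<le> T x" and H: "0 \<le> H x" for x
    using G_nonneg G_le_mass[OF u] by (auto simp: T_def H_def)
  have D: "0 \<le> D x" if "0 < x" for x
    using G_antimono[of x "\<gamma> * x" u] gamma_gt_1 that by (simp add: D_def)
  have "D x + T (\<gamma> * x) + H x = T x + H (\<gamma> * x) + mass u X * indicator {inverse \<gamma>..<1} x"
    if "0 < x" for x
    unfolding T_def H_def D_def using that by (rule decrement_split)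
  then have "mellin (\<lambda>x. D x + T (\<gamma> * x) + H x)
      = mellin (\<lambda>x. T x + H (\<gamma> * x) + mass u X * indicator {inverse \<gamma>..<1} x)"
    by (rule mellin_cong)
  moreover have "mellin (\<lambda>x. D x + T (\<gamma> * x) + H x) = mellin D + mellin (\<lambda>x. T (\<gamma> * x)) + mellin H"
    using D T H gamma_gt_1 by (simp add: mellin_add)
  moreover have "mellin (\<lambda>x. T x + H (\<gamma> * x) + mass u X * indicator {inverse \<gamma>..<1} x)
      = mellin T + mellin (\<lambda>x. H (\<gamma> * x)) + mellin (\<lambda>x. mass u X * indicator {inverse \<gamma>..<1} x)"
    using T H gamma_gt_1 mass_nonneg[OF u] by (simp add: mellin_add)
  moreover have "mellin D = K u" "mellin T = tail u" "mellin H = head u"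
    unfolding K_def tail_def head_def D_def T_def H_def by (rule refl)+
  moreover have "mellin (\<lambda>x. T (\<gamma> * x)) = ennreal \<kappa> * mellin T"
    unfolding \<kappa>_def by (rule mellin_dilation) (use gamma_gt_1 T_meas in auto)
  moreover have "mellin (\<lambda>x. H (\<gamma> * x)) = ennreal \<kappa> * mellin H"
    unfolding \<kappa>_def by (rule mellin_dilation) (use gamma_gt_1 H_meas in auto)
  moreover have "mellin (\<lambda>x. mass u X * indicator {inverse \<gamma>..<1} x) = ennreal (mass u X) * band"
    unfolding band_def using mass_nonneg[OF u] by (intro mellin_cmult) auto
  ultimately show ?thesis
    by simp
qed

lemma tail_finite:
  assumes u: "\<forall>x\<in>X. 0 \<le> u x"
  shows "tail u < \<infinity>"
proof -
  obtain \<Lambda> where \<Lambda>: "0 < \<Lambda>" "\<And>x. \<Lambda> \<le> x \<Longrightarrow> G u x = 0"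
    using G_eventually_zero[of u] by blast
  have "x powr s * G u x \<le> mass u X * x powr (q - 1)" if "1 \<le> x" for x
  proof -
    have "x powr s \<le> x powr (q - 1)"
      using that rho_pos by (intro powr_mono) (auto simp: s_def)
    then show ?thesis
      using G_nonneg[of u x] G_le_mass[OF u, of x] by (subst mult.commute) (intro mult_mono; simp)
  qed
  then show ?thesis
    unfolding tail_def using \<Lambda> mass_nonneg[OF u]
    by (intro mellin_finite[of "mass u X" \<Lambda>]) auto
qed

lemma head_finite:
  assumes u: "\<forall>x\<in>X. 0 \<le> u x"
  shows "head u < \<infinity>"
proof -
  have "x powr s * (mass u X - G u x) \<le> \<nu> X * x powr (q - 1)" if "0 < x" for x
  proof -
    have "x powr s * (mass u X - G u x) \<le> x powr s * (\<nu> X * x powr \<rho>)"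
      using mass_minus_G_le[OF u] by (intro mult_left_mono) auto
    also have "\<dots> = \<nu> X * x powr (q - 1)"
      using that by (simp add: powr_s)
    finally show ?thesis .
  qed
  then show ?thesis
    unfolding head_def using nonneg[of X] by (intro mellin_finite[of "\<nu> X" 1]) auto
qed

lemma band_finite: "band < \<infinity>"
  unfolding band_def
proof (rule mellin_finite[of 2 1])
  fix x :: real
  assume x: "0 < x" "x \<le> 1"
  show "x powr s * indicator {inverse \<gamma>..<1} x \<le> 2 * x powr (q - 1)"
  proof (cases "inverse \<gamma> \<le> x")
    case True
    have "inverse 2 = inverse \<gamma> powr \<rho>"
      by (simp add: inverse_powr gamma_powr)
    also have "\<dots> \<le> x powr \<rho>"
      using True gamma_gt_1 rho_pos by (intro powr_mono2) auto
    finally have "x powr (q - 1) / x powr \<rho> \<le> x powr (q - 1) / inverse 2"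
      by (intro divide_left_mono) auto
    then show ?thesis
      using x True by (simp add: powr_s indicator_def)
  qed (simp add: indicator_def)
qed (auto simp: indicator_def)

lemma K_finite:
  assumes u: "\<forall>x\<in>X. 0 \<le> u x"
  shows "K u < \<infinity>"
proof -
  have "K u \<le> K u + ennreal \<kappa> * tail u + head u"
    by (simp add: add.assoc)
  also have "\<dots> < \<infinity>"
    using K_decomposition[OF u] tail_finite[OF u] head_finite[OF u] band_finite
    by (simp add: ennreal_mult_less_top ennreal_add_less_top)
  finally show ?thesis .
qed

lemma K_eq:
  assumes u: "\<forall>x\<in>X. 0 \<le> u x"
  shows "enn2real (K u) = (1 - \<kappa>) * (enn2real (tail u) - enn2real (head u)) + mass u X * enn2real band"
proof -
  have "enn2real (K u) + \<kappa> * enn2real (tail u) + enn2real (head u)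
      = enn2real (tail u) + \<kappa> * enn2real (head u) + mass u X * enn2real band"
    using arg_cong[OF K_decomposition[OF u], of enn2real] K_finite[OF u] tail_finite[OF u] head_finite[OF u]
      band_finite kappa_pos mass_nonneg[OF u]
    by (simp add: enn2real_plus enn2real_mult ennreal_mult_less_top ennreal_add_less_top)
  then show ?thesis
    by (simp add: algebra_simps)
qed

lemma level_integral_finite:
  assumes u: "\<forall>x\<in>X. 0 \<le> u x"
  shows "level_integral u < \<infinity>"
  using level_integral_le_K[of u] K_finite[OF u]
  by (simp add: ennreal_mult_less_top order_le_less_trans)

lemma level_integral_le_K_real:
  assumes u: "\<forall>x\<in>X. 0 \<le> u x"
  shows "enn2real (level_integral u) \<le> 2 * q / \<kappa> * enn2real (K u)"
proof -
  have "enn2real (level_integral u) \<le> enn2real (ennreal (2 * q / \<kappa>) * K u)"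
    using level_integral_le_K[of u] K_finite[OF u] by (intro enn2real_mono) (auto simp: ennreal_mult_less_top)
  then show ?thesis
    using q_pos kappa_pos by (simp add: enn2real_mult)
qed

lemma K_le_level_integral_real:
  assumes u: "\<forall>x\<in>X. 0 \<le> u x"
  shows "2 * q / \<kappa> * enn2real (K u) \<le> 8 / \<kappa>\<^sup>2 * enn2real (level_integral u)"
proof -
  have "enn2real (ennreal (q * \<kappa> / 4) * K u) \<le> enn2real (level_integral u)"
    using K_le_level_integral[of u] level_integral_finite[OF u] by (intro enn2real_mono) auto
  then have "q * \<kappa> / 4 * enn2real (K u) \<le> enn2real (level_integral u)"
    using q_pos kappa_pos by (simp add: enn2real_mult)
  then have "8 / \<kappa>\<^sup>2 * (q * \<kappa> / 4 * enn2real (K u)) \<le> 8 / \<kappa>\<^sup>2 * enn2real (level_integral u)"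
    by (intro mult_left_mono) auto
  then show ?thesis
    using kappa_pos by (simp add: power2_eq_square field_simps)
qed

context
  fixes \<A> :: "'a set set"
  assumes \<A>: "\<A> \<subseteq> Pow X" "disjoint \<A>"
begin

lemma G_superadditive:
  "0 \<le> x \<Longrightarrow> (\<Sum>A\<in>\<A>. G (restr A u) x) \<le> G (restr (\<Union>\<A>) u) x"
  unfolding G_def by (intro surplus_superadditive \<A>) simp

lemma tail_superadditive:
  assumes u: "\<forall>x\<in>X. 0 \<le> u x"
  shows "(\<Sum>A\<in>\<A>. enn2real (tail (restr A u))) \<le> enn2real (tail (restr (\<Union>\<A>) u))"
proof (rule sum_enn2real_le)
  have "(\<Sum>A\<in>\<A>. tail (restr A u)) = mellin (\<lambda>x. \<Sum>A\<in>\<A>. if 1 \<le> x then G (restr A u) x else 0)"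
    unfolding tail_def by (intro mellin_sum[symmetric]) (auto simp: G_nonneg)
  also have "\<dots> \<le> tail (restr (\<Union>\<A>) u)"
    unfolding tail_def by (intro mellin_mono) (simp add: G_superadditive)
  finally show "(\<Sum>A\<in>\<A>. tail (restr A u)) \<le> tail (restr (\<Union>\<A>) u)" .
qed (use finite_subsets[OF \<A>(1)] tail_finite restr_nonneg[OF u] in auto)

lemma head_subadditive:
  assumes u: "\<forall>x\<in>X. 0 \<le> u x"
  shows "enn2real (head (restr (\<Union>\<A>) u)) \<le> (\<Sum>A\<in>\<A>. enn2real (head (restr A u)))"
proof (rule enn2real_le_sum)
  have "head (restr (\<Union>\<A>) u) \<le> mellin (\<lambda>x. \<Sum>A\<in>\<A>. if x < 1 then mass (restr A u) X - G (restr A u) x else 0)"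
    unfolding head_def
    by (intro mellin_mono) (simp add: sum_subtractf mass_restr_Union[OF \<A>] G_superadditive)
  also have "\<dots> = (\<Sum>A\<in>\<A>. head (restr A u))"
    unfolding head_def using G_le_mass[OF restr_nonneg[OF u]]
    by (intro mellin_sum) auto
  finally show "head (restr (\<Union>\<A>) u) \<le> (\<Sum>A\<in>\<A>. head (restr A u))" .
qed (use head_finite restr_nonneg[OF u] in auto)

lemma sum_K_eq:
  assumes u: "\<forall>x\<in>X. 0 \<le> u x"
  shows "(\<Sum>A\<in>\<A>. enn2real (K (restr A u)))
    = (1 - \<kappa>) * (\<Sum>A\<in>\<A>. enn2real (tail (restr A u)) - enn2real (head (restr A u)))
      + mass (restr (\<Union>\<A>) u) X * enn2real band"
proof -
  have "(\<Sum>A\<in>\<A>. enn2real (K (restr A u)))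
      = (\<Sum>A\<in>\<A>. (1 - \<kappa>) * (enn2real (tail (restr A u)) - enn2real (head (restr A u)))
          + mass (restr A u) X * enn2real band)"
    using K_eq[OF restr_nonneg[OF u]] by simp
  also have "\<dots> = (1 - \<kappa>) * (\<Sum>A\<in>\<A>. enn2real (tail (restr A u)) - enn2real (head (restr A u)))
      + (\<Sum>A\<in>\<A>. mass (restr A u) X) * enn2real band"
    by (simp add: sum.distrib sum_distrib_left sum_distrib_right)
  finally show ?thesis
    by (simp add: mass_restr_Union[OF \<A>])
qed

lemma tail_minus_head_superadditive:
  assumes u: "\<forall>x\<in>X. 0 \<le> u x"
  shows "(\<Sum>A\<in>\<A>. enn2real (tail (restr A u)) - enn2real (head (restr A u)))
    \<le> enn2real (tail (restr (\<Union>\<A>) u)) - enn2real (head (restr (\<Union>\<A>) u))"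
  using tail_superadditive[OF u] head_subadditive[OF u] by (simp add: sum_subtractf)

lemma K_superadditive:
  assumes u: "\<forall>x\<in>X. 0 \<le> u x" and "\<rho> \<le> q"
  shows "(\<Sum>A\<in>\<A>. enn2real (K (restr A u))) \<le> enn2real (K (restr (\<Union>\<A>) u))"
proof -
  have "0 \<le> 1 - \<kappa>"
    using kappa_le_1[OF assms(2)] by simp
  then show ?thesis
    using mult_left_mono[OF tail_minus_head_superadditive[OF u] \<open>0 \<le> 1 - \<kappa>\<close>] sum_K_eq[OF u] K_eq[OF restr_nonneg[OF u], of "\<Union>\<A>"]
    by linarith
qed

lemma K_subadditive:
  assumes u: "\<forall>x\<in>X. 0 \<le> u x" and "q \<le> \<rho>"
  shows "enn2real (K (restr (\<Union>\<A>) u)) \<le> (\<Sum>A\<in>\<A>. enn2real (K (restr A u)))"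
proof -
  have "1 - \<kappa> \<le> 0"
    using kappa_ge_1[OF assms(2)] by simp
  then show ?thesis
    using mult_left_mono_neg[OF tail_minus_head_superadditive[OF u] \<open>1 - \<kappa> \<le> 0\<close>] sum_K_eq[OF u] K_eq[OF restr_nonneg[OF u], of "\<Union>\<A>"]
    by linarith
qed

end

definition power_density :: "('a \<Rightarrow> real) \<Rightarrow> ('a \<Rightarrow> 'b::real_normed_vector) \<Rightarrow> 'a \<Rightarrow> real" where
  "power_density w g x = w x * norm (g x) powr \<rho>"

lemma power_density_nonneg: "pos_weight X w \<Longrightarrow> \<forall>x\<in>X. 0 \<le> power_density w g x"
  by (auto simp: power_density_def pos_weight_def)

lemma power_density_restr: "power_density w (restr A g) = restr A (power_density w g)"
  using rho_pos by (auto simp: power_density_def restr_def fun_eq_iff)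

lemma ell_size_eq_mass:
  assumes "E \<subseteq> X"
  shows "ell_size X \<nu> w (ereal \<rho>) (restr (X - B) g) E
    = \<nu> E powr - (1 / \<rho>) * mass (power_density w g) (E - B) powr (1 / \<rho>)"
proof -
  have "(\<Sum>x\<in>X. w x * norm (restr E (restr (X - B) g) x) powr \<rho>) = mass (power_density w g) (E - B)"
    unfolding mass_def power_density_def using finite_space rho_pos assms
    by (intro sum.mono_neutral_cong_right) (auto simp: restr_def)
  then show ?thesis
    using rho_pos by (simp add: ell_size_def Lr_norm_def inv_exp_def)
qed

lemma Linf_ell_le_iff_admissible:
  assumes "B \<subseteq> X" "0 < lam" "pos_weight X w"
  shows "Linf_ell X \<nu> w (ereal \<rho>) (restr (X - B) g) \<le> lam \<longleftrightarrow> admissible (power_density w g) (lam powr \<rho>) B"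
proof -
  have "ell_size X \<nu> w (ereal \<rho>) (restr (X - B) g) E \<le> lam
      \<longleftrightarrow> mass (power_density w g) (E - B) \<le> lam powr \<rho> * \<nu> E" if "E \<subseteq> X" "E \<noteq> {}" for E
    unfolding ell_size_eq_mass[OF that(1)]
    using root_scaled_le_iff[OF positive[OF that] mass_nonneg[OF power_density_nonneg[OF assms(3)]] assms(2) rho_pos]
    by (simp add: mult.commute)
  then have "Linf_ell X \<nu> w (ereal \<rho>) (restr (X - B) g) \<le> lam \<longleftrightarrow>
      (\<forall>E\<subseteq>X. E \<noteq> {} \<longrightarrow> mass (power_density w g) (E - B) \<le> lam powr \<rho> * \<nu> E)"
    using assms(2) by (simp add: Linf_ell_le_iff)
  also have "\<dots> \<longleftrightarrow> (\<forall>E\<subseteq>X. mass (power_density w g) (E - B) \<le> lam powr \<rho> * \<nu> E)"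
    by (auto simp: mass_def)
  finally show ?thesis
    using assms(1) by (simp add: admissible_def)
qed

lemma super_level_eq_level:
  assumes "0 < lam" "pos_weight X w"
  shows "super_level X \<nu> w (ereal \<rho>) g lam = level (power_density w g) (lam powr \<rho>)"
proof -
  have "{\<nu> B | B. B \<subseteq> X \<and> Linf_ell X \<nu> w (ereal \<rho>) (restr (X - B) g) \<le> lam}
      = {\<nu> B | B. admissible (power_density w g) (lam powr \<rho>) B}"
    using Linf_ell_le_iff_admissible[OF _ assms] by (auto simp: admissible_def)
  then show ?thesis
    unfolding super_level_def level_def by simp
qed

lemma Lq_ell_powr_eq_level_integral:
  assumes "pos_weight X w"
  shows "Lq_ell X \<nu> w q (ereal \<rho>) g powr q = enn2real (level_integral (power_density w g))"
proof -
  have "distribution_integral w (ereal \<rho>) q g = level_integral (power_density w g)"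
    unfolding distribution_integral_def level_integral_def
    by (intro nn_integral_cong) (simp add: super_level_eq_level[OF _ assms] indicator_def)
  then show ?thesis
    by (simp add: Lq_ell_powr_eq q_pos)
qed

context
  fixes w :: "'a \<Rightarrow> real" and \<A> :: "'a set set" and f :: "'a \<Rightarrow> 'b::real_normed_vector"
  assumes w: "pos_weight X w" and \<A>: "\<A> \<subseteq> Pow X" "disjoint \<A>"
begin

lemma Lq_ell_powr_restr:
  "Lq_ell X \<nu> w q (ereal \<rho>) (restr A f) powr q = enn2real (level_integral (restr A (power_density w f)))"
  by (simp add: Lq_ell_powr_eq_level_integral[OF w] power_density_restr)

lemma Lq_ell_sum_le:
  assumes "\<rho> \<le> q"
  shows "(\<Sum>A\<in>\<A>. Lq_ell X \<nu> w q (ereal \<rho>) (restr A f) powr q)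
    \<le> 8 / \<kappa>\<^sup>2 * Lq_ell X \<nu> w q (ereal \<rho>) (restr (\<Union>\<A>) f) powr q"
proof -
  define u where "u = power_density w f"
  have u: "\<forall>x\<in>X. 0 \<le> u x"
    unfolding u_def using w by (rule power_density_nonneg)
  have "(\<Sum>A\<in>\<A>. enn2real (level_integral (restr A u))) \<le> (\<Sum>A\<in>\<A>. 2 * q / \<kappa> * enn2real (K (restr A u)))"
    by (intro sum_mono level_integral_le_K_real restr_nonneg u)
  also have "\<dots> = 2 * q / \<kappa> * (\<Sum>A\<in>\<A>. enn2real (K (restr A u)))"
    by (rule sum_distrib_left[symmetric])
  also have "\<dots> \<le> 2 * q / \<kappa> * enn2real (K (restr (\<Union>\<A>) u))"
    using K_superadditive[OF \<A> u assms] q_pos kappa_pos by (intro mult_left_mono) auto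
  also have "\<dots> \<le> 8 / \<kappa>\<^sup>2 * enn2real (level_integral (restr (\<Union>\<A>) u))"
    by (intro K_le_level_integral_real restr_nonneg u)
  finally show ?thesis
    unfolding Lq_ell_powr_restr u_def .
qed

lemma Lq_ell_Union_le:
  assumes "q \<le> \<rho>"
  shows "Lq_ell X \<nu> w q (ereal \<rho>) (restr (\<Union>\<A>) f) powr q
    \<le> 8 / \<kappa>\<^sup>2 * (\<Sum>A\<in>\<A>. Lq_ell X \<nu> w q (ereal \<rho>) (restr A f) powr q)"
proof -
  define u where "u = power_density w f"
  have u: "\<forall>x\<in>X. 0 \<le> u x"
    unfolding u_def using w by (rule power_density_nonneg)
  have "enn2real (level_integral (restr (\<Union>\<A>) u)) \<le> 2 * q / \<kappa> * enn2real (K (restr (\<Union>\<A>) u))"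
    by (intro level_integral_le_K_real restr_nonneg u)
  also have "\<dots> \<le> 2 * q / \<kappa> * (\<Sum>A\<in>\<A>. enn2real (K (restr A u)))"
    using K_subadditive[OF \<A> u assms] q_pos kappa_pos by (intro mult_left_mono) auto
  also have "\<dots> = (\<Sum>A\<in>\<A>. 2 * q / \<kappa> * enn2real (K (restr A u)))"
    by (rule sum_distrib_left)
  also have "\<dots> \<le> (\<Sum>A\<in>\<A>. 8 / \<kappa>\<^sup>2 * enn2real (level_integral (restr A u)))"
    by (intro sum_mono K_le_level_integral_real restr_nonneg u)
  also have "\<dots> = 8 / \<kappa>\<^sup>2 * (\<Sum>A\<in>\<A>. enn2real (level_integral (restr A u)))"
    by (rule sum_distrib_left[symmetric])
  finally show ?thesis
    unfolding Lq_ell_powr_restr u_def .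
qed

end

end

theorem lemma3p1:
  fixes q :: real and r :: ereal
  assumes "0 < q" and "0 < r"
  shows "\<exists>C::real. \<forall>(X::'a set) \<nu> w (\<A>::'a set set) (f::'a \<Rightarrow> 'b::real_normed_vector).
    finite X \<and> outer_measure X \<nu> \<and> pos_weight X w \<and> \<A> \<subseteq> Pow X \<and> disjoint \<A> \<longrightarrow>
      (r \<le> ereal q \<longrightarrow>
         (\<Sum>A\<in>\<A>. Lq_ell X \<nu> w q r (restr A f) powr q)
           \<le> C * Lq_ell X \<nu> w q r (restr (\<Union>\<A>) f) powr q) \<and>
      (ereal q \<le> r \<longrightarrow>
         Lq_ell X \<nu> w q r (restr (\<Union>\<A>) f) powr q
           \<le> C * (\<Sum>A\<in>\<A>. Lq_ell X \<nu> w q r (restr A f) powr q))"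
proof (cases r)
  case (real \<rho>)
  show ?thesis
  proof (intro exI[of _ "8 / (2 powr ((\<rho> - q) / \<rho>))\<^sup>2"] allI impI, goal_cases)
    case (1 X \<nu> w \<A> f)
    then interpret mixed_norm X \<nu> q \<rho>
      using assms real by unfold_locales auto
    show ?case
      using 1 real Lq_ell_sum_le[of w \<A> f] Lq_ell_Union_le[of w \<A> f] by (simp add: kappa_eq)
  qed
next
  case PInf
  show ?thesis
  proof (intro exI[of _ 1] allI impI, goal_cases)
    case (1 X \<nu> w \<A> f)
    then interpret finite_outer_measure X \<nu>
      by unfold_locales auto
    show ?case
      using 1 PInf assms(1) Lq_ell_infinity_Union_le[of q \<A> w f] by simp
  qed
qed (use assms in simp)

end
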